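(* Let $\mathcal{T}=(V,\mathsf{p})$ be a directed forest with leafless support $\mathring{\mathcal{T}}=(V,\mathring{\mathsf{p}})$. If $v\in V\setminus\mathrm{root}(\mathring{\mathcal{T}})$, then $\mathring{\mathsf{p}}^n(v)=\mathsf{p}^n(v)$ for all $n\in\{0,1,2,\dots\}$. Consequently, if two vertices $v_1,v_2\in V\setminus\mathrm{root}(\mathring{\mathcal{T}})$ belong to the same tree of $\mathcal{T}$, then they belong to the same tree of $\mathring{\mathcal{T}}$. In particular, if $\mathcal{T}$ is a directed tree, then $\mathring{\mathcal{T}}$ contains at most one non-degenerate tree.
   Context: A directed forest is a pair $\mathcal{T}=(V,\mathsf{p})$ where $V$ is a nonempty set and $\mathsf{p}\colon V\to V$ satisfies: if $n\in\mathbb{N}$, $v\in V$ and $\mathsf{p}^n(v)=v$, then $\mathsf{p}(v)=v$. Roots: $\mathrm{root}(\mathcal{T})=\{v:\mathsf{p}(v)=v\}$. The forest is leafless if $\mathsf{p}(V)=V$. The trees of $\mathcal{T}$ are the connected components of the graph on $V$ with edges $\{\mathsf{p}(u),u\}$, $u\notin\mathrm{root}(\mathcal{T})$ (equivalently, classes of $u\sim w$ iff $\mathsf{p}^m(u)=\mathsf{p}^n(w)$ for some $m,n\ge0$); a tree $W$ is degenerate if $W$ is a single vertex; a directed tree is a directed forest with exactly one tree. $(V,\mathsf{p}_1)$ is thinner than $(V,\mathsf{p}_2)$ if $\mathsf{p}_1(v)\in\{v,\mathsf{p}_2(v)\}$ for all $v$. The leafless support $\mathring{\mathcal{T}}$ is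 the greatest (thickest) leafless directed forest on $V$ thinner than $\mathcal{T}$; it exists. *)

theory Defs
  imports Main
begin

definition directed_forest :: "'a set \<Rightarrow> ('a \<Rightarrow> 'a) \<Rightarrow> bool" where
  "directed_forest V p \<longleftrightarrow> V \<noteq> {} \<and> (\<forall>v\<in>V. p v \<in> V) \<and>
     (\<forall>n::nat. \<forall>v\<in>V. n \<ge> 1 \<and> (p ^^ n) v = v \<longrightarrow> p v = v)"

definition roots :: "'a set \<Rightarrow> ('a \<Rightarrow> 'a) \<Rightarrow> 'a set" where
  "roots V p = {v\<in>V. p v = v}"

definition leafless :: "'a set \<Rightarrow> ('a \<Rightarrow> 'a) \<Rightarrow> bool" where
  "leafless V p \<longleftrightarrow> p ` V = V"

definition thinner :: "'a set \<Rightarrow> ('a \<Rightarrow> 'a) \<Rightarrow> ('a \<Rightarrow> 'a) \<Rightarrow> bool" where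
  "thinner V p1 p2 \<longleftrightarrow> (\<forall>v\<in>V. p1 v = v \<or> p1 v = p2 v)"

definition is_leafless_support :: "'a set \<Rightarrow> ('a \<Rightarrow> 'a) \<Rightarrow> ('a \<Rightarrow> 'a) \<Rightarrow> bool" where
  "is_leafless_support V p q \<longleftrightarrow>
     directed_forest V q \<and> leafless V q \<and> thinner V q p \<and>
     (\<forall>r. directed_forest V r \<and> leafless V r \<and> thinner V r p \<longrightarrow> thinner V r q)"

definition same_tree :: "('a \<Rightarrow> 'a) \<Rightarrow> 'a \<Rightarrow> 'a \<Rightarrow> bool" where
  "same_tree p u w \<longleftrightarrow> (\<exists>m n::nat. (p ^^ m) u = (p ^^ n) w)"

definition tree_of :: "'a set \<Rightarrow> ('a \<Rightarrow> 'a) \<Rightarrow> 'a \<Rightarrow> 'a set" where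
  "tree_of V p v = {w\<in>V. same_tree p v w}"

definition trees :: "'a set \<Rightarrow> ('a \<Rightarrow> 'a) \<Rightarrow> 'a set set" where
  "trees V p = tree_of V p ` V"

definition degenerate :: "'a set \<Rightarrow> bool" where
  "degenerate W \<longleftrightarrow> (\<exists>x. W = {x})"

definition directed_tree :: "'a set \<Rightarrow> ('a \<Rightarrow> 'a) \<Rightarrow> bool" where
  "directed_tree V p \<longleftrightarrow> directed_forest V p \<and> (\<exists>!W. W \<in> trees V p)"

end

theory Submission
  imports Defs
begin

text \<open>Every map thinner than a directed forest is again a directed forest, since along
  its orbits it only stays put or follows \<open>p\<close>. Now let \<open>r\<close> be a root of the leafless
  support \<open>q\<close> that is the \<open>q\<close>-parent of some \<open>v \<noteq> r\<close>. If \<open>p r \<noteq> r\<close>, redirecting \<open>r\<close> to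
  \<open>p r\<close> in \<open>q\<close> gives a map that is still thinner than \<open>p\<close>, still leafless (\<open>r\<close> keeps
  the child \<open>v\<close>), hence a directed forest, but not thinner than \<open>q\<close>; this contradicts
  the maximality of \<open>q\<close>. So \<open>q\<close>-orbits of non-roots follow \<open>p\<close> until they stop at a
  common root of \<open>p\<close> and \<open>q\<close>; in particular non-roots of \<open>q\<close> in one tree of \<open>p\<close>
  lie in one tree of \<open>q\<close>. Finally, every non-degenerate tree of \<open>q\<close> contains a
  non-root, so for a directed tree \<open>p\<close> all of them coincide.\<close>

lemma funpow_fixed: "f x = x \<Longrightarrow> (f ^^ n) x = x"
  by (induction n) auto

lemma same_tree_refl: "same_tree p a a"
  unfolding same_tree_def by (rule exI[of _ 0])+ simp

lemma same_tree_sym: "same_tree p a b \<Longrightarrow> same_tree p b a"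
  unfolding same_tree_def by (blast intro: sym)

lemma same_tree_trans:
  assumes "same_tree p a b" "same_tree p b c"
  shows "same_tree p a c"
proof -
  obtain m n where mn: "(p ^^ m) a = (p ^^ n) b"
    using assms(1) unfolding same_tree_def by blast
  obtain k l where kl: "(p ^^ k) b = (p ^^ l) c"
    using assms(2) unfolding same_tree_def by blast
  have "(p ^^ (k + m)) a = (p ^^ (n + k)) b"
    by (simp add: funpow_add mn add.commute[of n])
  also have "\<dots> = (p ^^ (n + l)) c"
    by (simp add: funpow_add kl)
  finally show ?thesis
    unfolding same_tree_def by blast
qed

lemma tree_of_eq:
  assumes "same_tree p a b"
  shows "tree_of V p a = tree_of V p b"
proof -
  have "same_tree p a w \<longleftrightarrow> same_tree p b w" for w
    using same_tree_trans[OF assms] same_tree_trans[OF same_tree_sym[OF assms]] by blast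
  then show ?thesis
    unfolding tree_of_def by blast
qed

lemma in_tree_of: "a \<in> V \<Longrightarrow> a \<in> tree_of V p a"
  unfolding tree_of_def by (simp add: same_tree_refl)

lemma directed_forest_periodic:
  assumes "directed_forest V p" "x \<in> V" "(p ^^ Suc n) x = x"
  shows "p x = x"
proof -
  have "Suc n \<ge> 1"
    by simp
  with assms show ?thesis
    unfolding directed_forest_def by blast
qed

lemma funpow_thinner:
  assumes "thinner V s p" "s ` V \<subseteq> V" "x \<in> V"
  shows "\<exists>j. (s ^^ n) x = (p ^^ j) x"
proof (induction n)
  case 0
  show ?case
    by (rule exI[of _ 0]) simp
next
  case (Suc n)
  then obtain j where j: "(s ^^ n) x = (p ^^ j) x" ..
  have "(s ^^ n) x \<in> V"
    using assms(2,3) by (induction n) auto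
  then have "s ((s ^^ n) x) = (s ^^ n) x \<or> s ((s ^^ n) x) = p ((s ^^ n) x)"
    using assms(1) unfolding thinner_def by blast
  then have "(s ^^ Suc n) x = (p ^^ j) x \<or> (s ^^ Suc n) x = (p ^^ Suc j) x"
    using j by simp
  then show ?case
    by blast
qed

lemma directed_forest_thinner:
  assumes forest: "directed_forest V p" and thin: "thinner V s p" and closed: "s ` V \<subseteq> V"
  shows "directed_forest V s"
proof -
  have "s x = x" if "x \<in> V" "n \<ge> 1" "(s ^^ n) x = x" for n x
  proof (cases "s x = p x")
    case True
    obtain m where "n = Suc m"
      using \<open>n \<ge> 1\<close> by (cases n) auto
    then have "(s ^^ m) (s x) = x"
      using \<open>(s ^^ n) x = x\<close> by (simp add: funpow_Suc_right del: funpow.simps)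
    moreover obtain j where "(s ^^ m) (s x) = (p ^^ j) (s x)"
      using funpow_thinner[OF thin closed] closed \<open>x \<in> V\<close> by blast
    ultimately have "(p ^^ j) (p x) = x"
      using True by simp
    then have "(p ^^ Suc j) x = x"
      by (simp add: funpow_swap1)
    then have "p x = x"
      by (rule directed_forest_periodic[OF forest \<open>x \<in> V\<close>])
    then show ?thesis
      using True by simp
  next
    case False
    then show ?thesis
      using thin \<open>x \<in> V\<close> unfolding thinner_def by blast
  qed
  then show ?thesis
    using forest closed unfolding directed_forest_def by blast
qed

lemma leafless_support_parent_root:
  assumes forest: "directed_forest V p" and support: "is_leafless_support V p q"
    and "v \<in> V" "q v \<noteq> v" "q (q v) = q v"
  shows "p (q v) = q v"
proof -
  define r where "r = q v"
  define s where "s = q(r := p r)"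
  have q_leafless: "q ` V = V" and q_thin: "thinner V q p"
    using support unfolding is_leafless_support_def leafless_def by auto
  have "r \<in> V"
    using q_leafless \<open>v \<in> V\<close> unfolding r_def by blast
  have "p r \<in> V"
    using forest \<open>r \<in> V\<close> unfolding directed_forest_def by blast
  have s_closed: "s ` V \<subseteq> V"
    using q_leafless \<open>p r \<in> V\<close> unfolding s_def by auto
  have s_thin: "thinner V s p"
    using q_thin unfolding thinner_def s_def by auto
  have "V \<subseteq> s ` V"
  proof
    fix x assume "x \<in> V"
    then obtain u where "u \<in> V" "x = q u"
      using q_leafless by blast
    show "x \<in> s ` V"
    proof (cases "u = r")
      case True
      have "x = s v"
        using True \<open>x = q u\<close> \<open>q v \<noteq> v\<close> \<open>q (q v) = q v\<close> unfolding s_def r_def by simp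
      then show ?thesis
        using \<open>v \<in> V\<close> by blast
    next
      case False
      then have "x = s u"
        using \<open>x = q u\<close> unfolding s_def by simp
      then show ?thesis
        using \<open>u \<in> V\<close> by blast
    qed
  qed
  with s_closed have "leafless V s"
    unfolding leafless_def by blast
  moreover have "directed_forest V s"
    using directed_forest_thinner[OF forest s_thin s_closed] .
  ultimately have "thinner V s q"
    using support s_thin unfolding is_leafless_support_def by blast
  then have "p r = r \<or> p r = q r"
    using \<open>r \<in> V\<close> unfolding thinner_def s_def by auto
  then show ?thesis
    using \<open>q (q v) = q v\<close> unfolding r_def by auto
qed

lemma leafless_support_funpow_eq:
  assumes forest: "directed_forest V p" and support: "is_leafless_support V p q"
  shows "v \<in> V \<Longrightarrow> q v \<noteq> v \<Longrightarrow> (q ^^ n) v = (p ^^ n) v"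
proof (induction n arbitrary: v)
  case 0
  show ?case by simp
next
  case (Suc n)
  have "directed_forest V q" and "thinner V q p"
    using support unfolding is_leafless_support_def by auto
  then have "q v = p v" and "q v \<in> V"
    using Suc.prems unfolding thinner_def directed_forest_def by blast+
  moreover have "(q ^^ n) (q v) = (p ^^ n) (q v)"
  proof (cases "q (q v) = q v")
    case True
    then have "p (q v) = q v"
      using leafless_support_parent_root[OF forest support] Suc.prems by blast
    with True show ?thesis
      by (simp add: funpow_fixed)
  next
    case False
    then show ?thesis
      using Suc.IH \<open>q v \<in> V\<close> by blast
  qed
  ultimately show ?case
    by (simp add: funpow_Suc_right del: funpow.simps)
qed

lemma leafless_support_same_tree:
  assumes "directed_forest V p" "is_leafless_support V p q"
    and "v1 \<in> V - roots V q" "v2 \<in> V - roots V q" "same_tree p v1 v2"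
  shows "same_tree q v1 v2"
proof -
  obtain m n where "(p ^^ m) v1 = (p ^^ n) v2"
    using assms(5) unfolding same_tree_def by blast
  then have "(q ^^ m) v1 = (q ^^ n) v2"
    using leafless_support_funpow_eq[OF assms(1,2)] assms(3,4) unfolding roots_def by auto
  then show ?thesis
    unfolding same_tree_def by blast
qed

lemma nondegenerate_tree_of_nonroot:
  assumes "W \<in> trees V q" "\<not> degenerate W"
  shows "\<exists>b\<in>V - roots V q. W = tree_of V q b"
proof -
  obtain a where a: "a \<in> V" "W = tree_of V q a"
    using assms(1) unfolding trees_def by blast
  moreover have "a \<in> W"
    using a in_tree_of by simp
  ultimately obtain w where "w \<in> W" "w \<noteq> a"
    using assms(2) unfolding degenerate_def by blast
  then have "w \<in> V" and a_w: "same_tree q a w"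
    using a unfolding tree_of_def by auto
  show ?thesis
  proof (cases "q a = a")
    case True
    have "q w \<noteq> w"
    proof
      assume "q w = w"
      then show False
        using a_w True \<open>w \<noteq> a\<close> unfolding same_tree_def by (simp add: funpow_fixed)
    qed
    then show ?thesis
      using \<open>w \<in> V\<close> a(2) tree_of_eq[OF a_w] unfolding roots_def by blast
  next
    case False
    then show ?thesis
      using a unfolding roots_def by blast
  qed
qed

lemma directed_tree_same_tree:
  assumes "directed_tree V p" "u \<in> V" "w \<in> V"
  shows "same_tree p u w"
proof -
  have "tree_of V p u \<in> trees V p" "tree_of V p w \<in> trees V p"
    using assms(2,3) unfolding trees_def by auto
  then have "tree_of V p u = tree_of V p w"
    using assms(1) unfolding directed_tree_def by blast
  then show ?thesis
    using in_tree_of[OF \<open>w \<in> V\<close>] unfolding tree_of_def by blast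
qed

theorem corollary4p6:
  fixes V :: "'a set" and p q :: "'a \<Rightarrow> 'a"
  assumes "directed_forest V p"
    and "is_leafless_support V p q"
  shows "(\<forall>v\<in>V - roots V q. \<forall>n::nat. (q ^^ n) v = (p ^^ n) v)
    \<and> (\<forall>v1\<in>V - roots V q. \<forall>v2\<in>V - roots V q. same_tree p v1 v2 \<longrightarrow> same_tree q v1 v2)
    \<and> (directed_tree V p \<longrightarrow>
         (\<forall>W1\<in>trees V q. \<forall>W2\<in>trees V q.
            \<not> degenerate W1 \<and> \<not> degenerate W2 \<longrightarrow> W1 = W2))"
proof (intro conjI impI ballI allI)
  show "(q ^^ n) v = (p ^^ n) v" if "v \<in> V - roots V q" for v n
    using leafless_support_funpow_eq[OF assms] that unfolding roots_def by blast
  show "same_tree q v1 v2"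
    if "v1 \<in> V - roots V q" "v2 \<in> V - roots V q" "same_tree p v1 v2" for v1 v2
    using leafless_support_same_tree[OF assms that] .
  fix W1 W2
  assume tree: "directed_tree V p" and "W1 \<in> trees V q" "W2 \<in> trees V q"
    and "\<not> degenerate W1 \<and> \<not> degenerate W2"
  then obtain b1 b2 where b: "b1 \<in> V - roots V q" "b2 \<in> V - roots V q"
    and W: "W1 = tree_of V q b1" "W2 = tree_of V q b2"
    using nondegenerate_tree_of_nonroot by meson
  then have "same_tree p b1 b2"
    using directed_tree_same_tree[OF tree] by blast
  then have "same_tree q b1 b2"
    using leafless_support_same_tree[OF assms b] by blast
  then show "W1 = W2"
    unfolding W by (rule tree_of_eq)
qed

end
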